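(* For every two absolutely continuous probability measures $\mu,\nu$ on $\mathbb R$, there exist random variables $X,Y$ on a common probability space, distributed $\mu$ and $\nu$ respectively, such that $X-Y$ is almost surely a rational number. *)

theory Defs
  imports "HOL-Probability.Probability"
begin

end

(*
  Write mu = f dx, nu = g dx and enumerate the rationals as r 0, r 1, ...  At stage k the
  still unmatched parts F, G of the densities are matched greedily along the shift r k:
  the mass min (F x) (G (x - r k)) at x is paired with the same mass at x - r k.  The
  limiting residues F, G have equal total mass, and F x and G (x - q) are never both
  positive for rational q.  By Steinhaus' theorem, however, any two sets A, B of positive
  measure contain points x in A, x - q in B with q rational: the t with A and B + t meeting
  in positive measure form a non-null set by Fubini, and the difference set of such a
  meeting contains an interval around 0.  So one residue has null support, and both vanish.
  The matched masses then form a coupling concentrated on the lines x - y = r k.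
*)
theory Submission
  imports Defs
begin

section \<open>Steinhaus' theorem\<close>

lemma emeasure_lborel_translation:
  fixes K :: "'a::euclidean_space set"
  assumes "K \<in> sets borel"
  shows "emeasure lborel {x. x - a \<in> K} = emeasure lborel K"
proof -
  have "emeasure lborel K = emeasure (distr lborel borel ((+) (- a))) K"
    by (simp add: lborel_distr_plus)
  also have "\<dots> = emeasure lborel {x. x - a \<in> K}"
    using assms by (simp add: emeasure_distr vimage_def)
  finally show ?thesis ..
qed

lemma compact_subset_of_positive_lborel_measure:
  fixes C :: "'a::euclidean_space set"
  assumes "C \<in> sets borel" and "0 < emeasure lborel C"
  obtains K where "compact K" "K \<subseteq> C" "0 < emeasure lborel K"
proof -
  obtain N K where N: "negligible N" and K: "\<And>n::nat. compact (K n)"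
    and C: "C = (\<Union>n. K n) \<union> N"
    using lebesgue_regular_inner[of C] assms(1) by auto
  have "\<exists>n. 0 < emeasure lborel (K n)"
  proof (rule ccontr)
    assume "\<not> ?thesis"
    then have "K n \<in> null_sets lborel" for n
      using K by (simp add: null_sets_def compact_imp_closed borel_closed)
    then have "(\<Union>n. K n) \<union> N \<in> null_sets lebesgue"
      using N null_sets_completionI[OF null_sets_UN] by (auto simp: negligible_iff_null_sets)
    then have "C \<in> null_sets lebesgue"
      using C by simp
    then show False
      using assms by (simp add: null_sets_completion_iff null_sets_def)
  qed
  then show thesis
    using that K C by blast
qed

theorem Steinhaus:
  fixes C :: "'a::euclidean_space set"
  assumes "C \<in> sets borel" and "0 < emeasure lborel C"
  obtains \<delta> where "0 < \<delta>" "ball 0 \<delta> \<subseteq> {x - y | x y. x \<in> C \<and> y \<in> C}"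
proof -
  obtain K where K: "compact K" "K \<subseteq> C" "0 < emeasure lborel K"
    using compact_subset_of_positive_lborel_measure assms by blast
  have K_borel: "K \<in> sets borel"
    using K(1) by (simp add: borel_compact)
  have "emeasure lborel K < \<infinity>"
    using K(1) by (rule emeasure_compact_finite)
  then obtain k where k: "emeasure lborel K = ennreal k" "0 < k"
    using K(3) by (cases "emeasure lborel K") auto
  obtain U where U: "open U" "K \<subseteq> U" "emeasure lborel (U - K) < k"
    using outer_regular_lborel[OF K_borel k(2)] by blast
  obtain \<delta> where \<delta>: "0 < \<delta>" "(\<Union>x\<in>K. ball x \<delta>) \<subseteq> U"
    using compact_subset_open_imp_ball_epsilon_subset[OF K(1) U(1,2)] by blast
  \<comment> \<open>Otherwise K and its translate by s are disjoint subsets of U,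
    so 2 \<lambda>(K) \<le> \<lambda>(U) < 2 \<lambda>(K).\<close>
  have "s \<in> {x - y | x y. x \<in> C \<and> y \<in> C}" if s: "s \<in> ball 0 \<delta>" for s
  proof (rule ccontr)
    assume not_diff: "s \<notin> {x - y | x y. x \<in> C \<and> y \<in> C}"
    define K' where "K' = {x. x - s \<in> K}"
    have K'_borel: "K' \<in> sets borel"
      using K_borel unfolding K'_def by measurable
    have "K \<inter> K' = {}"
      using not_diff K(2) by (force simp: K'_def)
    moreover have "K' \<subseteq> U"
      using s \<delta>(2) by (force simp: K'_def dist_norm)
    ultimately have "emeasure lborel K + emeasure lborel K' \<le> emeasure lborel U"
      using K_borel K'_borel U by (simp add: plus_emeasure emeasure_mono)
    also have "\<dots> = emeasure lborel K + emeasure lborel (U - K)"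
      using plus_emeasure[of K lborel "U - K"] K_borel U by (simp add: Un_absorb1 sets.Diff)
    also have "\<dots> < emeasure lborel K + emeasure lborel K'"
      using U(3) k K_borel by (simp add: K'_def emeasure_lborel_translation ennreal_add_left_cancel_less)
    finally show False by simp
  qed
  then show thesis
    using that \<delta>(1) by blast
qed

lemma nn_integral_emeasure_translation_Int:
  fixes A B :: "real set"
  assumes [measurable]: "A \<in> sets borel" "B \<in> sets borel"
  shows "(\<integral>\<^sup>+t. emeasure lborel {x\<in>A. x - t \<in> B} \<partial>lborel) = emeasure lborel A * emeasure lborel B"
proof -
  have "(\<integral>\<^sup>+t. emeasure lborel {x\<in>A. x - t \<in> B} \<partial>lborel)
      = (\<integral>\<^sup>+t. \<integral>\<^sup>+x. indicator A x * indicator B (x - t) \<partial>lborel \<partial>lborel)"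
    by (intro nn_integral_cong) (simp flip: nn_integral_indicator add: indicator_def of_bool_conj)
  also have "\<dots> = (\<integral>\<^sup>+x. \<integral>\<^sup>+t. indicator A x * indicator B (x - t) \<partial>lborel \<partial>lborel)"
    by (intro lborel_pair.Fubini') measurable
  also have "\<dots> = (\<integral>\<^sup>+x. indicator A x * emeasure lborel B \<partial>lborel)"
  proof (intro nn_integral_cong)
    fix x
    have "(\<integral>\<^sup>+t. indicator B (x - t) \<partial>lborel) = emeasure lborel B"
      using nn_integral_real_affine[of "indicator B" "-1" x] by simp
    then show "(\<integral>\<^sup>+t. indicator A x * indicator B (x - t) \<partial>lborel) = indicator A x * emeasure lborel B"
      by (simp add: nn_integral_cmult)
  qed
  also have "\<dots> = emeasure lborel A * emeasure lborel B"
    by (simp add: nn_integral_multc)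
  finally show ?thesis .
qed

lemma rational_translate_meets:
  fixes A B :: "real set"
  assumes [measurable]: "A \<in> sets borel" "B \<in> sets borel"
    and "0 < emeasure lborel A" "0 < emeasure lborel B"
  obtains q x where "q \<in> \<rat>" "x \<in> A" "x - q \<in> B"
proof -
  have "0 < (\<integral>\<^sup>+t. emeasure lborel {x\<in>A. x - t \<in> B} \<partial>lborel)"
    using assms(3,4) by (simp add: nn_integral_emeasure_translation_Int ennreal_zero_less_mult_iff)
  then obtain t where "0 < emeasure lborel {x\<in>A. x - t \<in> B}"
    using not_gr_zero by fastforce
  then obtain \<delta> where \<delta>: "0 < \<delta>"
      "ball 0 \<delta> \<subseteq> {x - y | x y. x \<in> {x\<in>A. x - t \<in> B} \<and> y \<in> {x\<in>A. x - t \<in> B}}"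
    by (rule Steinhaus[rotated]) measurable
  obtain q where q: "q \<in> \<rat>" "t - \<delta> < q" "q < t + \<delta>"
    using Rats_dense_in_real[of "t - \<delta>" "t + \<delta>"] \<delta>(1) by auto
  then have "q - t \<in> ball 0 \<delta>"
    by (simp add: dist_real_def)
  then obtain x y where "q - t = x - y" "x \<in> A" "y - t \<in> B"
    using \<delta>(2) by blast
  moreover have "x - q = y - t"
    using \<open>q - t = x - y\<close> by simp
  ultimately show thesis
    using that q(1) by simp
qed

lemma AE_eq_0_if_rational_translates_disjoint:
  fixes F G :: "real \<Rightarrow> ennreal"
  assumes [measurable]: "F \<in> borel_measurable borel" "G \<in> borel_measurable borel"
    and mass: "(\<integral>\<^sup>+x. F x \<partial>lborel) = (\<integral>\<^sup>+x. G x \<partial>lborel)"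
    and disjoint: "\<And>q x. q \<in> \<rat> \<Longrightarrow> F x = 0 \<or> G (x - q) = 0"
  shows "AE x in lborel. F x = 0" and "AE x in lborel. G x = 0"
proof -
  have "emeasure lborel {x. F x \<noteq> 0} = 0 \<or> emeasure lborel {x. G x \<noteq> 0} = 0"
  proof (rule ccontr)
    assume "\<not> ?thesis"
    then obtain q x where "q \<in> \<rat>" "F x \<noteq> 0" "G (x - q) \<noteq> 0"
      by (auto simp: zero_less_iff_neq_zero intro: rational_translate_meets[of "{x. F x \<noteq> 0}" "{x. G x \<noteq> 0}"])
    then show False
      using disjoint by blast
  qed
  then have "(\<integral>\<^sup>+x. F x \<partial>lborel) = 0 \<or> (\<integral>\<^sup>+x. G x \<partial>lborel) = 0"
    by (simp add: nn_integral_0_iff)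
  then have "(\<integral>\<^sup>+x. F x \<partial>lborel) = 0" "(\<integral>\<^sup>+x. G x \<partial>lborel) = 0"
    using mass by auto
  then show "AE x in lborel. F x = 0" and "AE x in lborel. G x = 0"
    by (simp_all add: nn_integral_0_iff_AE)
qed

section \<open>Greedy matching along rational shifts\<close>

context
  fixes f g :: "real \<Rightarrow> ennreal" and r :: "nat \<Rightarrow> real"
begin

fun residual_left :: "nat \<Rightarrow> real \<Rightarrow> ennreal"
  and residual_right :: "nat \<Rightarrow> real \<Rightarrow> ennreal" where
  "residual_left 0 = f"
| "residual_right 0 = g"
| "residual_left (Suc k) =
     (\<lambda>x. residual_left k x - min (residual_left k x) (residual_right k (x - r k)))"
| "residual_right (Suc k) =
     (\<lambda>y. residual_right k y - min (residual_left k (y + r k)) (residual_right k y))"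

definition transported :: "nat \<Rightarrow> real \<Rightarrow> ennreal" where
  "transported k x = min (residual_left k x) (residual_right k (x - r k))"

lemma residual_left_Suc: "residual_left (Suc k) x = residual_left k x - transported k x"
  by (simp add: transported_def)

lemma residual_right_Suc: "residual_right (Suc k) y = residual_right k y - transported k (y + r k)"
  by (simp add: transported_def)

lemma borel_measurable_residual:
  assumes [measurable]: "f \<in> borel_measurable borel" "g \<in> borel_measurable borel"
  shows "residual_left k \<in> borel_measurable borel \<and> residual_right k \<in> borel_measurable borel"
proof (induction k)
  case (Suc k)
  then have [measurable]: "residual_left k \<in> borel_measurable borel" "residual_right k \<in> borel_measurable borel"
    by auto
  show ?case
    by simp
qed simp

lemma borel_measurable_transported:
  assumes "f \<in> borel_measurable borel" "g \<in> borel_measurable borel"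
  shows "transported k \<in> borel_measurable borel"
proof -
  have [measurable]: "residual_left k \<in> borel_measurable borel" "residual_right k \<in> borel_measurable borel"
    using borel_measurable_residual[OF assms] by auto
  show ?thesis
    unfolding transported_def[abs_def] by measurable
qed

lemma residual_telescope:
  "f x = (\<Sum>j<k. transported j x) + residual_left k x"
  "g y = (\<Sum>j<k. transported j (y + r j)) + residual_right k y"
proof (induction k)
  case (Suc k)
  have "residual_left (Suc k) x + transported k x = residual_left k x"
    unfolding residual_left_Suc by (rule diff_add_cancel_ennreal) (simp add: transported_def)
  with Suc.IH(1) show "f x = (\<Sum>j<Suc k. transported j x) + residual_left (Suc k) x"
    by (simp add: add.assoc add.commute[of "transported k x"])
  have "residual_right (Suc k) y + transported k (y + r k) = residual_right k y"
    unfolding residual_right_Suc by (rule diff_add_cancel_ennreal) (simp add: transported_def)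
  with Suc.IH(2) show "g y = (\<Sum>j<Suc k. transported j (y + r j)) + residual_right (Suc k) y"
    by (simp add: add.assoc add.commute[of "transported k (y + r k)"])
qed simp_all

lemma residual_left_le: "residual_left k x \<le> f x"
  by (metis residual_telescope(1) add.commute le_iff_add)

(* The finiteness hypothesis is needed because \<infinity> - \<infinity> = \<infinity> in ennreal. *)
lemma residual_disjoint:
  assumes "residual_left k x \<noteq> \<infinity>"
  shows "residual_left (Suc k) x = 0 \<or> residual_right (Suc k) (x - r k) = 0"
proof (cases "residual_left k x \<le> residual_right k (x - r k)")
  case False
  then have "residual_right k (x - r k) < \<infinity>"
    using less_le_trans[OF _ top_greatest] by (simp add: not_le)
  then show ?thesis
    using False by (simp add: min_def)
qed (use assms in simp)

lemma residual_limit: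
  "f x = (\<Sum>j. transported j x) + (INF k. residual_left k x)"
  "g y = (\<Sum>j. transported j (y + r j)) + (INF k. residual_right k y)"
proof -
  have "decseq (\<lambda>k. residual_left k x)" "decseq (\<lambda>k. residual_right k y)"
    by (simp_all add: decseq_Suc_iff residual_left_Suc residual_right_Suc)
  then have "(\<lambda>k. (\<Sum>j<k. transported j x) + residual_left k x)
               \<longlonglongrightarrow> (\<Sum>j. transported j x) + (INF k. residual_left k x)"
    and "(\<lambda>k. (\<Sum>j<k. transported j (y + r j)) + residual_right k y)
               \<longlonglongrightarrow> (\<Sum>j. transported j (y + r j)) + (INF k. residual_right k y)"
    by (auto intro!: tendsto_add summable_LIMSEQ LIMSEQ_INF)
  then show "f x = (\<Sum>j. transported j x) + (INF k. residual_left k x)"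
    and "g y = (\<Sum>j. transported j (y + r j)) + (INF k. residual_right k y)"
    unfolding residual_telescope[symmetric] by (simp_all add: LIMSEQ_const_iff)
qed

lemma nn_integral_residual_limit:
  assumes [measurable]: "f \<in> borel_measurable borel" "g \<in> borel_measurable borel"
  shows "(\<integral>\<^sup>+x. f x \<partial>lborel)
           = (\<Sum>j. \<integral>\<^sup>+x. transported j x \<partial>lborel) + (\<integral>\<^sup>+x. (INF k. residual_left k x) \<partial>lborel)"
    and "(\<integral>\<^sup>+y. g y \<partial>lborel)
           = (\<Sum>j. \<integral>\<^sup>+x. transported j x \<partial>lborel) + (\<integral>\<^sup>+y. (INF k. residual_right k y) \<partial>lborel)"
proof -
  have [measurable]: "residual_left k \<in> borel_measurable borel" "residual_right k \<in> borel_measurable borel"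
    "transported k \<in> borel_measurable borel" for k
    using borel_measurable_residual borel_measurable_transported by auto
  have translate: "(\<integral>\<^sup>+y. transported j (y + r j) \<partial>lborel) = (\<integral>\<^sup>+x. transported j x \<partial>lborel)" for j
    using nn_integral_real_affine[of "transported j" 1 "r j"] by (simp add: add.commute)
  show "(\<integral>\<^sup>+x. f x \<partial>lborel)
           = (\<Sum>j. \<integral>\<^sup>+x. transported j x \<partial>lborel) + (\<integral>\<^sup>+x. (INF k. residual_left k x) \<partial>lborel)"
    by (subst residual_limit(1)) (simp add: nn_integral_add nn_integral_suminf)
  show "(\<integral>\<^sup>+y. g y \<partial>lborel)
           = (\<Sum>j. \<integral>\<^sup>+x. transported j x \<partial>lborel) + (\<integral>\<^sup>+y. (INF k. residual_right k y) \<partial>lborel)"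
    by (subst residual_limit(2)) (simp add: nn_integral_add nn_integral_suminf translate)
qed

end

theorem AE_eq_sum_transported:
  fixes f g :: "real \<Rightarrow> ennreal" and r :: "nat \<Rightarrow> real"
  assumes [measurable]: "f \<in> borel_measurable borel" "g \<in> borel_measurable borel"
    and finite: "\<And>x. f x \<noteq> \<infinity>"
    and mass: "(\<integral>\<^sup>+x. f x \<partial>lborel) = (\<integral>\<^sup>+y. g y \<partial>lborel)" "(\<integral>\<^sup>+x. f x \<partial>lborel) \<noteq> \<infinity>"
    and shifts: "\<rat> \<subseteq> range r"
  shows "AE x in lborel. f x = (\<Sum>j. transported f g r j x)"
    and "AE y in lborel. g y = (\<Sum>j. transported f g r j (y + r j))"
proof -
  define F where "F x = (INF k. residual_left f g r k x)" for x
  define G where "G y = (INF k. residual_right f g r k y)" for y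
  have [measurable]: "residual_left f g r k \<in> borel_measurable borel"
    "residual_right f g r k \<in> borel_measurable borel" for k
    using borel_measurable_residual by auto
  have measurable_FG: "F \<in> borel_measurable borel" "G \<in> borel_measurable borel"
    unfolding F_def[abs_def] G_def[abs_def] by measurable
  have mass_FG: "(\<integral>\<^sup>+x. F x \<partial>lborel) = (\<integral>\<^sup>+y. G y \<partial>lborel)"
    using nn_integral_residual_limit[where f=f and g=g and r=r] mass
    by (auto simp: F_def G_def ennreal_add_left_cancel)
  have disjoint: "F x = 0 \<or> G (x - q) = 0" if "q \<in> \<rat>" for q x
  proof -
    obtain k where "q = r k"
      using shifts \<open>q \<in> \<rat>\<close> by blast
    moreover have "residual_left f g r k x \<noteq> \<infinity>"
      using residual_left_le[of f g r k x] finite[of x] by (auto simp: top_unique)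
    then have "residual_left f g r (Suc k) x = 0 \<or> residual_right f g r (Suc k) (x - r k) = 0"
      by (rule residual_disjoint)
    moreover have "F x \<le> residual_left f g r (Suc k) x" "G y \<le> residual_right f g r (Suc k) y" for y
      unfolding F_def G_def by (rule INF_lower; simp)+
    ultimately show ?thesis
      by (metis le_zero_eq)
  qed
  have "AE x in lborel. F x = 0"
    using disjoint by (rule AE_eq_0_if_rational_translates_disjoint(1)[OF measurable_FG mass_FG])
  then show "AE x in lborel. f x = (\<Sum>j. transported f g r j x)"
    by eventually_elim (subst residual_limit(1)[where g=g and r=r], simp add: F_def)
  have "AE y in lborel. G y = 0"
    using disjoint by (rule AE_eq_0_if_rational_translates_disjoint(2)[OF measurable_FG mass_FG])
  then show "AE y in lborel. g y = (\<Sum>j. transported f g r j (y + r j))"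
    by eventually_elim (subst residual_limit(2)[where f=f and r=r], simp add: G_def)
qed

section \<open>Couplings supported on countably many shifts\<close>

(* A point (x, q) stands for the pair X = x, Y = x - q; the slice q = r j carries density h j. *)
definition shift_coupling :: "(nat \<Rightarrow> real \<Rightarrow> ennreal) \<Rightarrow> (nat \<Rightarrow> real) \<Rightarrow> (real \<times> real) measure" where
  "shift_coupling h r = density (lborel \<Otimes>\<^sub>M count_space (range r))
     (\<lambda>(x, q). \<Sum>j. h j x * indicator {r j} q)"

lemma
  shows space_shift_coupling: "space (shift_coupling h r) = UNIV \<times> range r"
    and sets_shift_coupling [measurable_cong]: "sets (shift_coupling h r) = sets (lborel \<Otimes>\<^sub>M count_space (range r))"
  by (simp_all add: shift_coupling_def space_pair_measure)

lemma nn_integral_shift_coupling: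
  assumes [measurable]: "\<And>j. h j \<in> borel_measurable borel"
    and [measurable]: "\<phi> \<in> borel_measurable (lborel \<Otimes>\<^sub>M count_space (range r))"
  shows "(\<integral>\<^sup>+z. \<phi> z \<partial>shift_coupling h r) = (\<Sum>j. \<integral>\<^sup>+x. h j x * \<phi> (x, r j) \<partial>lborel)"
proof -
  interpret shifts: sigma_finite_measure "count_space (range r)"
    by (rule sigma_finite_measure_count_space_countable) simp
  have [measurable]: "(\<lambda>q. indicator {r j} q :: ennreal) \<in> borel_measurable (count_space (range r))" for j
    by simp
  have inner: "(\<integral>\<^sup>+q. (\<Sum>j. h j x * indicator {r j} q) * \<phi> (x, q) \<partial>count_space (range r))
      = (\<Sum>j. h j x * \<phi> (x, r j))" for x
  proof -
    have "(\<integral>\<^sup>+q. (\<Sum>j. h j x * indicator {r j} q) * \<phi> (x, q) \<partial>count_space (range r))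
        = (\<Sum>j. \<integral>\<^sup>+q. h j x * \<phi> (x, q) * indicator {r j} q \<partial>count_space (range r))"
      by (subst ennreal_suminf_multc[symmetric], subst nn_integral_suminf) (simp_all add: ac_simps)
    then show ?thesis
      by simp
  qed
  have "(\<integral>\<^sup>+z. \<phi> z \<partial>shift_coupling h r)
      = (\<integral>\<^sup>+z. (\<Sum>j. h j (fst z) * indicator {r j} (snd z)) * \<phi> z \<partial>(lborel \<Otimes>\<^sub>M count_space (range r)))"
    unfolding shift_coupling_def by (subst nn_integral_density) (auto simp: case_prod_beta')
  also have "\<dots> = (\<integral>\<^sup>+x. (\<Sum>j. h j x * \<phi> (x, r j)) \<partial>lborel)"
    by (simp flip: shifts.nn_integral_fst add: inner)
  also have "\<dots> = (\<Sum>j. \<integral>\<^sup>+x. h j x * \<phi> (x, r j) \<partial>lborel)"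
    by (rule nn_integral_suminf) measurable
  finally show ?thesis .
qed

lemma borel_measurable_snd_count_space [measurable]:
  "snd \<in> borel_measurable (M \<Otimes>\<^sub>M count_space A)"
  by (rule measurable_compose[OF measurable_snd]) simp

lemma emeasure_distr_shift_coupling:
  assumes "\<And>j. h j \<in> borel_measurable borel"
    and [measurable]: "T \<in> borel_measurable (lborel \<Otimes>\<^sub>M count_space (range r))" "A \<in> sets borel"
  shows "emeasure (distr (shift_coupling h r) borel T) A
           = (\<Sum>j. \<integral>\<^sup>+x. h j x * indicator A (T (x, r j)) \<partial>lborel)"
proof -
  have "emeasure (distr (shift_coupling h r) borel T) A = (\<integral>\<^sup>+z. indicator A (T z) \<partial>shift_coupling h r)"
    by (simp flip: nn_integral_indicator add: nn_integral_distr)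
  also have "\<dots> = (\<Sum>j. \<integral>\<^sup>+x. h j x * indicator A (T (x, r j)) \<partial>lborel)"
    by (rule nn_integral_shift_coupling[OF assms(1)]) measurable
  finally show ?thesis .
qed

lemma distr_fst_shift_coupling:
  assumes [measurable]: "\<And>j. h j \<in> borel_measurable borel"
  shows "distr (shift_coupling h r) borel fst = density lborel (\<lambda>x. \<Sum>j. h j x)"
proof (rule measure_eqI)
  fix A :: "real set"
  assume "A \<in> sets (distr (shift_coupling h r) borel fst)"
  then have [measurable]: "A \<in> sets borel"
    by simp
  have "emeasure (distr (shift_coupling h r) borel fst) A = (\<Sum>j. \<integral>\<^sup>+x. h j x * indicator A x \<partial>lborel)"
    by (simp add: emeasure_distr_shift_coupling)
  also have "\<dots> = emeasure (density lborel (\<lambda>x. \<Sum>j. h j x)) A"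
    by (simp add: emeasure_density flip: nn_integral_suminf)
  finally show "emeasure (distr (shift_coupling h r) borel fst) A = emeasure (density lborel (\<lambda>x. \<Sum>j. h j x)) A" .
qed simp

lemma distr_diff_shift_coupling:
  assumes [measurable]: "\<And>j. h j \<in> borel_measurable borel"
  shows "distr (shift_coupling h r) borel (\<lambda>(x, q). x - q) = density lborel (\<lambda>y. \<Sum>j. h j (y + r j))"
proof (rule measure_eqI)
  fix A :: "real set"
  assume "A \<in> sets (distr (shift_coupling h r) borel (\<lambda>(x, q). x - q))"
  then have [measurable]: "A \<in> sets borel"
    by simp
  have [measurable]: "(\<lambda>(x, q). x - q) \<in> borel_measurable (lborel \<Otimes>\<^sub>M count_space (range r))"
    unfolding case_prod_beta' by measurable
  have "emeasure (distr (shift_coupling h r) borel (\<lambda>(x, q). x - q)) A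
      = (\<Sum>j. \<integral>\<^sup>+x. h j x * indicator A (x - r j) \<partial>lborel)"
    by (simp add: emeasure_distr_shift_coupling)
  also have "\<dots> = (\<Sum>j. \<integral>\<^sup>+y. h j (y + r j) * indicator A y \<partial>lborel)"
  proof (rule suminf_cong)
    fix j
    show "(\<integral>\<^sup>+x. h j x * indicator A (x - r j) \<partial>lborel) = (\<integral>\<^sup>+y. h j (y + r j) * indicator A y \<partial>lborel)"
      using nn_integral_real_affine[of "\<lambda>x. h j x * indicator A (x - r j)" 1 "r j"]
      by (simp add: add.commute)
  qed
  also have "\<dots> = emeasure (density lborel (\<lambda>y. \<Sum>j. h j (y + r j))) A"
    by (simp add: emeasure_density flip: nn_integral_suminf)
  finally show "emeasure (distr (shift_coupling h r) borel (\<lambda>(x, q). x - q)) A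
      = emeasure (density lborel (\<lambda>y. \<Sum>j. h j (y + r j))) A" .
qed simp

lemma shift_coupling_transported:
  fixes f g :: "real \<Rightarrow> ennreal" and r :: "nat \<Rightarrow> real"
  assumes [measurable]: "f \<in> borel_measurable borel" "g \<in> borel_measurable borel"
    and "\<And>x. f x \<noteq> \<infinity>"
    and "(\<integral>\<^sup>+x. f x \<partial>lborel) = (\<integral>\<^sup>+y. g y \<partial>lborel)" "(\<integral>\<^sup>+x. f x \<partial>lborel) \<noteq> \<infinity>"
    and "\<rat> \<subseteq> range r"
  defines "M \<equiv> shift_coupling (transported f g r) r"
  shows "distr M borel fst = density lborel f"
    and "distr M borel (\<lambda>(x, q). x - q) = density lborel g"
proof -
  have h [measurable]: "transported f g r j \<in> borel_measurable borel" for j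
    by (rule borel_measurable_transported) measurable
  have "AE x in lborel. (\<Sum>j. transported f g r j x) = f x"
    and "AE y in lborel. (\<Sum>j. transported f g r j (y + r j)) = g y"
    using AE_eq_sum_transported[of f g r] assms by (auto elim: eventually_mono)
  then show "distr M borel fst = density lborel f"
    and "distr M borel (\<lambda>(x, q). x - q) = density lborel g"
    unfolding M_def distr_fst_shift_coupling[OF h] distr_diff_shift_coupling[OF h]
    by (auto intro!: density_cong)
qed

lemma (in sigma_finite_measure) Radon_Nikodym_finite_valued:
  assumes "absolutely_continuous M N" "sets N = sets M" "emeasure N (space N) \<noteq> \<infinity>"
  obtains f where "f \<in> borel_measurable M" "\<And>x. f x \<noteq> \<infinity>" "N = density M f"
proof -
  obtain f' where f' [measurable]: "f' \<in> borel_measurable M" and N: "N = density M f'"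
    using Radon_Nikodym[OF assms(1,2)] by auto
  have "emeasure N (space N) = (\<integral>\<^sup>+x. f' x \<partial>M)"
    unfolding N by (simp add: emeasure_density)
  then have "AE x in M. f' x \<noteq> \<infinity>"
    using assms(3) by (intro nn_integral_PInf_AE) auto
  then have "AE x in M. f' x = (if f' x = \<infinity> then 0 else f' x)"
    by eventually_elim simp
  then have "N = density M (\<lambda>x. if f' x = \<infinity> then 0 else f' x)"
    unfolding N by (intro density_cong) auto
  then show thesis
    by (rule that[rotated 2]) auto
qed

theorem corollary8p6:
  fixes \<mu> \<nu> :: "real measure"
  assumes "prob_space \<mu>" and "sets \<mu> = sets borel"
      and "absolutely_continuous lborel \<mu>"
      and "prob_space \<nu>" and "sets \<nu> = sets borel"
      and "absolutely_continuous lborel \<nu>"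
  shows "\<exists>(M :: (real \<times> real) measure) X Y.
           prob_space M \<and>
           X \<in> borel_measurable M \<and> Y \<in> borel_measurable M \<and>
           distr M borel X = \<mu> \<and> distr M borel Y = \<nu> \<and>
           (AE \<omega> in M. X \<omega> - Y \<omega> \<in> \<rat>)"
proof -
  obtain f where [measurable]: "f \<in> borel_measurable borel"
    and f: "\<And>x. f x \<noteq> \<infinity>" "\<mu> = density lborel f"
    using lborel.Radon_Nikodym_finite_valued[of \<mu>] assms(1-3) by (auto simp: prob_space.emeasure_space_1)
  obtain g where [measurable]: "g \<in> borel_measurable borel" and g: "\<nu> = density lborel g"
    using lborel.Radon_Nikodym_finite_valued[of \<nu>] assms(4-6) by (auto simp: prob_space.emeasure_space_1)
  have mass: "(\<integral>\<^sup>+x. f x \<partial>lborel) = 1" "(\<integral>\<^sup>+y. g y \<partial>lborel) = 1"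
    using prob_space.emeasure_space_1[OF assms(1)] prob_space.emeasure_space_1[OF assms(4)]
    by (simp_all add: f(2) g emeasure_density)
  obtain r :: "nat \<Rightarrow> real" where r: "range r = \<rat>"
    using range_from_nat_into[OF _ countable_rat] by blast
  define M where "M = shift_coupling (transported f g r) r"
  have measurable: "fst \<in> borel_measurable M" "(\<lambda>(x, q). x - q) \<in> borel_measurable M"
    unfolding M_def by measurable
  have marginals: "distr M borel fst = \<mu>" "distr M borel (\<lambda>(x, q). x - q) = \<nu>"
    using shift_coupling_transported[of f g r] f g mass r by (simp_all add: M_def)
  have "prob_space M"
    using prob_space_distrD[OF measurable(1)] marginals(1) assms(1) by simp
  moreover have "AE \<omega> in M. fst \<omega> - (case \<omega> of (x, q) \<Rightarrow> x - q) \<in> \<rat>"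
    using r by (intro AE_I2) (auto simp: M_def space_shift_coupling)
  ultimately show ?thesis
    using measurable marginals by blast
qed

end
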